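(* Let $x\in\mathcal X$. If $T(x)\ge 1-\alpha$, then $\mathcal U_x(\mu)\ge 0$ for all $\mu\ge 0$. Otherwise, $\mu\mapsto\mathcal U_x(\mu)$ is decreasing on $[0,\infty)$.
   Context: Let $(X,Y)\sim P_{XY}$ on $\mathcal X\times\mathcal Y$, $\alpha\in(0,1)$, $\mathcal I$ a finite collection of subsets of $\mathcal Y$, $w:\mathcal I\to(0,B)$ a bounded positive weight. For $C\in\mathcal I$ let $p_C(x)=\mathbb P(Y\in C\mid X=x)$, $\ell_{x,C}(\mu)=w(C)p_C(x)+\mu(p_C(x)-(1-\alpha))$ for $\mu\ge0$, $\mathcal U_x(\mu)=\max_{C\in\mathcal I}\ell_{x,C}(\mu)$, and $T(x)=\max_{C\in\mathcal I}p_C(x)$. *)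

theory Defs
  imports "HOL-Probability.Probability"
begin

text \<open>The conditional law of Y given X = x is represented by a kernel
  K :: 'x => 'y measure (a regular conditional distribution), so that
  p_C(x) = P(Y in C | X = x) = measure (K x) C.\<close>

definition pC :: "('x \<Rightarrow> 'y measure) \<Rightarrow> 'y set \<Rightarrow> 'x \<Rightarrow> real" where
  "pC K C x = measure (K x) C"

definition ell :: "('x \<Rightarrow> 'y measure) \<Rightarrow> ('y set \<Rightarrow> real) \<Rightarrow> real \<Rightarrow> 'x \<Rightarrow> 'y set \<Rightarrow> real \<Rightarrow> real" where
  "ell K w \<alpha> x C \<mu> = w C * pC K C x + \<mu> * (pC K C x - (1 - \<alpha>))"

definition U :: "('x \<Rightarrow> 'y measure) \<Rightarrow> ('y set \<Rightarrow> real) \<Rightarrow> real \<Rightarrow> 'y set set \<Rightarrow> 'x \<Rightarrow> real \<Rightarrow> real" where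
  "U K w \<alpha> \<I> x \<mu> = Max ((\<lambda>C. ell K w \<alpha> x C \<mu>) ` \<I>)"

definition T :: "('x \<Rightarrow> 'y measure) \<Rightarrow> 'y set set \<Rightarrow> 'x \<Rightarrow> real" where
  "T K \<I> x = Max ((\<lambda>C. pC K C x) ` \<I>)"

end

theory Submission
  imports Defs
begin

text \<open>Each \<open>\<ell>\<^sub>x\<^sub>,\<^sub>C\<close> is affine in \<open>\<mu>\<close> with slope \<open>p\<^sub>C(x) - (1 - \<alpha>)\<close>.
  If \<open>T(x) \<ge> 1 - \<alpha>\<close>, a set \<open>C\<close> attaining \<open>T(x)\<close> has nonnegative slope and
  nonnegative intercept \<open>w(C) p\<^sub>C(x)\<close>, so \<open>\<ell>\<^sub>x\<^sub>,\<^sub>C \<ge> 0\<close> on \<open>[0,\<infinity>)\<close> and hence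
  \<open>\<U>\<^sub>x \<ge> 0\<close>. Otherwise every slope is negative, every \<open>\<ell>\<^sub>x\<^sub>,\<^sub>C\<close> is strictly
  decreasing, and so is their finite maximum \<open>\<U>\<^sub>x\<close>.\<close>

lemma Max_image_strict_mono:
  fixes f g :: "'a \<Rightarrow> 'b::linorder"
  assumes "finite A" "A \<noteq> {}" "\<And>a. a \<in> A \<Longrightarrow> f a < g a"
  shows "Max (f ` A) < Max (g ` A)"
proof -
  have "f a < Max (g ` A)" if "a \<in> A" for a
  proof -
    have "f a < g a" using assms(3) that .
    also have "\<dots> \<le> Max (g ` A)" using assms(1) that by simp
    finally show ?thesis .
  qed
  with assms(1,2) show ?thesis by simp
qed

lemma pC_nonneg: "0 \<le> pC K C x"
  unfolding pC_def by simp

lemma pC_le_T: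
  assumes "finite \<I>" "C \<in> \<I>"
  shows "pC K C x \<le> T K \<I> x"
  unfolding T_def using assms by (intro Max_ge) auto

lemma T_attained:
  assumes "finite \<I>" "\<I> \<noteq> {}"
  obtains C where "C \<in> \<I>" "T K \<I> x = pC K C x"
proof -
  have "T K \<I> x \<in> (\<lambda>C. pC K C x) ` \<I>"
    unfolding T_def using assms by (intro Max_in) auto
  then show ?thesis using that by blast
qed

lemma ell_le_U:
  assumes "finite \<I>" "C \<in> \<I>"
  shows "ell K w \<alpha> x C \<mu> \<le> U K w \<alpha> \<I> x \<mu>"
  unfolding U_def using assms by (intro Max_ge) auto

lemma ell_nonneg:
  assumes "0 \<le> w C" "1 - \<alpha> \<le> pC K C x" "0 \<le> \<mu>"
  shows "0 \<le> ell K w \<alpha> x C \<mu>"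
  unfolding ell_def using assms pC_nonneg[of K C x] by simp

lemma ell_strict_antimono:
  assumes "pC K C x < 1 - \<alpha>" "\<mu>1 < \<mu>2"
  shows "ell K w \<alpha> x C \<mu>2 < ell K w \<alpha> x C \<mu>1"
proof -
  have "\<mu>2 * (pC K C x - (1 - \<alpha>)) < \<mu>1 * (pC K C x - (1 - \<alpha>))"
    using assms by (simp add: mult_strict_right_mono_neg)
  then show ?thesis unfolding ell_def by simp
qed

lemma U_strict_antimono:
  assumes "finite \<I>" "\<I> \<noteq> {}" "T K \<I> x < 1 - \<alpha>" "\<mu>1 < \<mu>2"
  shows "U K w \<alpha> \<I> x \<mu>2 < U K w \<alpha> \<I> x \<mu>1"
proof -
  have "ell K w \<alpha> x C \<mu>2 < ell K w \<alpha> x C \<mu>1" if "C \<in> \<I>" for C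
  proof (rule ell_strict_antimono)
    show "pC K C x < 1 - \<alpha>"
      using pC_le_T[OF assms(1) that, of K x] assms(3) by linarith
  qed (rule assms(4))
  with assms(1,2) show ?thesis
    unfolding U_def by (rule Max_image_strict_mono)
qed

lemma U_nonneg:
  assumes "finite \<I>" "\<I> \<noteq> {}" "\<And>C. C \<in> \<I> \<Longrightarrow> 0 \<le> w C"
    and "1 - \<alpha> \<le> T K \<I> x" "0 \<le> \<mu>"
  shows "0 \<le> U K w \<alpha> \<I> x \<mu>"
proof -
  obtain C where C: "C \<in> \<I>" "T K \<I> x = pC K C x"
    using assms(1,2) by (rule T_attained)
  have "0 \<le> ell K w \<alpha> x C \<mu>"
  proof (rule ell_nonneg)
    show "0 \<le> w C" using assms(3) C(1) .
    show "1 - \<alpha> \<le> pC K C x" using assms(4) C(2) by simp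
  qed (rule assms(5))
  also have "\<dots> \<le> U K w \<alpha> \<I> x \<mu>"
    using assms(1) C(1) by (rule ell_le_U)
  finally show ?thesis .
qed

theorem lemma2:
  fixes K :: "'x \<Rightarrow> 'y measure" and w :: "'y set \<Rightarrow> real"
    and \<I> :: "'y set set" and \<alpha> B :: real and x :: 'x
  assumes K_prob: "\<And>x. prob_space (K x)"
    and I_meas: "\<And>x. \<I> \<subseteq> sets (K x)"
    and alpha: "0 < \<alpha>" "\<alpha> < 1"
    and I_fin: "finite \<I>" and I_ne: "\<I> \<noteq> {}"
    and w_bd: "\<And>C. C \<in> \<I> \<Longrightarrow> 0 < w C \<and> w C < B"
  shows "(T K \<I> x \<ge> 1 - \<alpha> \<longrightarrow> (\<forall>\<mu>\<ge>0. U K w \<alpha> \<I> x \<mu> \<ge> 0))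
       \<and> (T K \<I> x < 1 - \<alpha> \<longrightarrow>
            (\<forall>\<mu>1 \<mu>2. 0 \<le> \<mu>1 \<and> \<mu>1 < \<mu>2 \<longrightarrow> U K w \<alpha> \<I> x \<mu>2 < U K w \<alpha> \<I> x \<mu>1))"
proof (intro conjI impI allI)
  have w_nonneg: "\<And>C. C \<in> \<I> \<Longrightarrow> 0 \<le> w C"
    using w_bd by (simp add: less_imp_le)
  show "0 \<le> U K w \<alpha> \<I> x \<mu>" if "1 - \<alpha> \<le> T K \<I> x" "0 \<le> \<mu>" for \<mu>
    using U_nonneg[OF I_fin I_ne w_nonneg that] .
  show "U K w \<alpha> \<I> x \<mu>2 < U K w \<alpha> \<I> x \<mu>1"
    if "T K \<I> x < 1 - \<alpha>" "0 \<le> \<mu>1 \<and> \<mu>1 < \<mu>2" for \<mu>1 \<mu>2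
    using U_strict_antimono[OF I_fin I_ne that(1)] that(2) by simp
qed

end
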